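(* Let $(\Omega,\mathcal H,\mathbb E)$ be a sublinear expectation space with $\mathbb E[\cdot]=\sup_{\theta\in\Theta}E_{P_\theta}[\cdot]$, and consider a discrete memoryless uncertain-distribution channel $[\mathcal X,\{\boldsymbol P_\lambda\}_{\lambda\in\Lambda},\mathcal Y]$ with finite alphabets. Let $(M_n,n,\varphi_n,\psi_n)$, $n\ge1$, be a sequence of nonlinear channel codes, all with coding rate $R_c$. If $\sup_{\theta\in\Theta}P^{(n)}_{e,\theta}\to0$ as $n\to\infty$, then $R_c\le\overline C$.
   Context: Sublinear expectation space: $\mathcal H$ a linear space of real functions on $\Omega$ (containing constants, closed under $|\cdot|$ and under bounded Borel functions of finitely many elements), $\mathbb E$ monotone, constant preserving, subadditive and positively homogeneous, here represented as $\sup_\theta E_{P_\theta}$ for probability measures $P_\theta$. Channel: $\boldsymbol P_\lambda=(p_\lambda(y|x))$ are transition probability matrices from $\mathcal X$ to $\mathcal Y$; memoryless means that for input random variables $X_1,\dots,X_n$ and output random variables $Y_1,\dots,Y_n$ on the space, for all $x_i,y_i$: $\{P_\theta(Y_1=y_1,\dots,Y_n=y_n|X_1=x_1,\dots,X_n=x_n)\}_{\theta\in\Theta}=\{\prod_{i=1}^n p_\lambda(y_i|x_i)\}_{\lambda\in\Lambda}$. A $(M,n,\varphi_n,\psi_n)$ nonlinear channel code has message set $\mathcal S=\{1,\dots,M\}$, encoder $\varphi_n:\mathcal S\to\mathcal X^n$ and decoder $\psi_n:\mathcal Y^n\to\mathcal S$; rate $\frac{\log M}{n}$. The message $S$ is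 a random variable on the space, $\boldsymbol X^n=\varphi_n(S)$ is sent, $\boldsymbol Y^n$ is the channel output, $\hat S=\psi_n(\boldsymbol Y^n)$, and $P^{(n)}_{e,\theta}=P_\theta(\hat S\ne S)$, so $\mathbb E[I_{\{\hat S\ne S\}}]=\sup_\theta P^{(n)}_{e,\theta}$. Finally $\overline C=\sup_{p}\sup_{\lambda\in\Lambda}\sum_{x,y}p(x)p_\lambda(y|x)\log\frac{p_\lambda(y|x)}{\sum_{x'}p(x')p_\lambda(y|x')}$, the first supremum over all probability distributions $p$ on $\mathcal X$. *)

theory Defs
  imports "HOL-Probability.Probability"
begin

definition stoch_matrix :: "('x::finite \<Rightarrow> 'y::finite \<Rightarrow> real) \<Rightarrow> bool" where
  "stoch_matrix W \<longleftrightarrow> (\<forall>x y. 0 \<le> W x y) \<and> (\<forall>x. (\<Sum>y\<in>UNIV. W x y) = 1)"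

definition input_dist :: "('x::finite \<Rightarrow> real) \<Rightarrow> bool" where
  "input_dist p \<longleftrightarrow> (\<forall>x. 0 \<le> p x) \<and> (\<Sum>x\<in>UNIV. p x) = 1"

text \<open>Mutual information of input distribution p and channel W (natural log;
the convention 0 log 0 = 0 is automatic since ln 0 = 0 in Isabelle).\<close>
definition mutual_info :: "('x::finite \<Rightarrow> real) \<Rightarrow> ('x \<Rightarrow> 'y::finite \<Rightarrow> real) \<Rightarrow> real" where
  "mutual_info p W =
     (\<Sum>x\<in>UNIV. \<Sum>y\<in>UNIV. p x * W x y * ln (W x y / (\<Sum>x'\<in>UNIV. p x' * W x' y)))"

definition upper_capacity :: "('l \<Rightarrow> 'x::finite \<Rightarrow> 'y::finite \<Rightarrow> real) \<Rightarrow> 'l set \<Rightarrow> real" where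
  "upper_capacity W \<Lambda> = (SUP pl \<in> {p. input_dist p} \<times> \<Lambda>. mutual_info (fst pl) (W (snd pl)))"

text \<open>Under the probability measure M, the conditional law of the output word Y given
the input word X (length n) is the memoryless product channel built from W:
  P(X = xs, Y = ys) = P(X = xs) * prod_i W(x_i, y_i),
i.e. P(Y = ys | X = xs) = prod_i W(x_i,y_i) whenever P(X = xs) > 0.\<close>
definition memoryless_law ::
  "'w measure \<Rightarrow> ('w \<Rightarrow> 'x list) \<Rightarrow> ('w \<Rightarrow> 'y list) \<Rightarrow> ('x \<Rightarrow> 'y \<Rightarrow> real) \<Rightarrow> nat \<Rightarrow> bool" where
  "memoryless_law M X Y W n \<longleftrightarrow>
     (\<forall>xs ys. length xs = n \<longrightarrow> length ys = n \<longrightarrow>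
        measure M {\<omega> \<in> space M. X \<omega> = xs \<and> Y \<omega> = ys}
          = measure M {\<omega> \<in> space M. X \<omega> = xs} * (\<Prod>i<n. W (xs ! i) (ys ! i)))"

end

theory Submission
  imports Defs
begin

(* Fix a parameter theta and a channel matrix V realising it. Compare the joint law
   (1/m) V^n(ys | enc s) of message and output with the reference law "uniform message
   times Q", where Q is the product of the output laws of the empirical letter distributions
   of the codebook. Their divergence is exactly the sum of the n per-letter mutual
   informations, hence at most n C. Gibbs' inequality against the reference inflated by the
   factor m on the decoding region bounds the same divergence from below by
   (1 - P_e) ln m - 1. With ln m = n R_c this gives (1 - P_e) R_c <= C + 1/n, and P_e -> 0
   yields R_c <= C. *)

lemma finite_lists_length: "finite {ys :: 'y::finite list. length ys = n}"
  using finite_lists_length_eq[of "UNIV :: 'y set" n] by simp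

lemma sum_lists_length_prod:
  fixes F :: "nat \<Rightarrow> 'y::finite \<Rightarrow> 'a::comm_semiring_1"
  shows "(\<Sum>ys | length ys = n. \<Prod>j<n. F j (ys ! j)) = (\<Prod>j<n. \<Sum>t\<in>UNIV. F j t)"
proof (induction n arbitrary: F)
  case 0
  have "{ys::'y list. length ys = 0} = {[]}" by auto
  then show ?case by simp
next
  case (Suc n)
  have lists_Suc: "{ys::'y list. length ys = Suc n} = (\<lambda>(t, ys). t # ys) ` (UNIV \<times> {ys. length ys = n})"
    by (auto simp: length_Suc_conv)
  have inj: "inj_on (\<lambda>(t, ys). t # ys) (UNIV \<times> {ys::'y list. length ys = n})"
    by (auto simp: inj_on_def)
  have "(\<Sum>ys | length ys = Suc n. \<Prod>j<Suc n. F j (ys ! j))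
      = (\<Sum>(t, ys) \<in> UNIV \<times> {ys. length ys = n}. \<Prod>j<Suc n. F j ((t # ys) ! j))"
    unfolding lists_Suc by (subst sum.reindex[OF inj]) (simp add: case_prod_unfold)
  also have "\<dots> = (\<Sum>t\<in>UNIV. \<Sum>ys | length ys = n. F 0 t * (\<Prod>j<n. F (Suc j) (ys ! j)))"
    by (subst sum.cartesian_product[symmetric])
      (simp only: prod.lessThan_Suc_shift nth_Cons_0 nth_Cons_Suc)
  also have "\<dots> = (\<Sum>t\<in>UNIV. F 0 t * (\<Prod>j<n. \<Sum>t\<in>UNIV. F (Suc j) t))"
    using Suc.IH[of "\<lambda>j. F (Suc j)"] by (simp add: sum_distrib_left[symmetric])
  also have "\<dots> = (\<Prod>j<Suc n. \<Sum>t\<in>UNIV. F j t)"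
    by (simp only: prod.lessThan_Suc_shift sum_distrib_right)
  finally show ?case .
qed

lemma sum_lists_length_prod_mult_nth:
  fixes V :: "nat \<Rightarrow> 'y::finite \<Rightarrow> 'a::comm_semiring_1"
  assumes "i < n" and "\<And>j. (\<Sum>t\<in>UNIV. V j t) = 1"
  shows "(\<Sum>ys | length ys = n. (\<Prod>j<n. V j (ys ! j)) * h (ys ! i)) = (\<Sum>t\<in>UNIV. V i t * h t)"
proof -
  have "(\<Sum>ys | length ys = n. (\<Prod>j<n. V j (ys ! j)) * h (ys ! i))
      = (\<Sum>ys | length ys = n. \<Prod>j<n. V j (ys ! j) * (if j = i then h (ys ! j) else 1))"
    using assms(1) by (simp add: prod.distrib prod.delta)
  also have "\<dots> = (\<Prod>j<n. \<Sum>t\<in>UNIV. V j t * (if j = i then h t else 1))"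
    by (rule sum_lists_length_prod)
  also have "\<dots> = (\<Prod>j<n. if j = i then (\<Sum>t\<in>UNIV. V i t * h t) else 1)"
    by (rule prod.cong) (auto simp: assms(2))
  also have "\<dots> = (\<Sum>t\<in>UNIV. V i t * h t)"
    using assms(1) by (simp add: prod.delta)
  finally show ?thesis .
qed

lemma diff_le_mult_ln_div:
  fixes a b :: real
  assumes "0 \<le> a" "0 \<le> b" "0 < a \<Longrightarrow> 0 < b"
  shows "a - b \<le> a * ln (a / b)"
proof (cases "a = 0")
  case True
  then show ?thesis using assms by simp
next
  case False
  then have a: "0 < a" and b: "0 < b" using assms by auto
  have "a * ln (b / a) \<le> a * (b / a - 1)"
    using a b by (intro mult_left_mono ln_le_minus_one) auto
  also have "\<dots> = b - a"
    using a by (simp add: field_simps)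
  finally show ?thesis
    using a b by (simp add: ln_div algebra_simps)
qed

text \<open>Meta-converse: apply Gibbs' inequality to J against R inflated by the factor c on D,
  a reference of total mass at most 2.\<close>
lemma success_ln_le_divergence:
  fixes J R :: "'a \<Rightarrow> real"
  assumes "finite A"
    and J: "\<And>x. x \<in> A \<Longrightarrow> 0 \<le> J x" and R: "\<And>x. x \<in> A \<Longrightarrow> 0 \<le> R x"
    and JR: "\<And>x. x \<in> A \<Longrightarrow> 0 < J x \<Longrightarrow> 0 < R x"
    and "sum J A = 1" "sum R A \<le> 1" "1 \<le> c" "c * sum R (A \<inter> D) \<le> 1"
  shows "sum J (A \<inter> D) * ln c - 1 \<le> (\<Sum>x\<in>A. J x * ln (J x / R x))"
proof -
  define g where "g x = (if x \<in> D then c else 1)" for x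
  have g: "1 \<le> g x" for x using \<open>1 \<le> c\<close> by (simp add: g_def)
  have pointwise: "J x - R x * g x + (if x \<in> D then J x else 0) * ln c \<le> J x * ln (J x / R x)"
    if x: "x \<in> A" for x
  proof (cases "J x = 0")
    case True
    then show ?thesis using R[OF x] g[of x] by simp
  next
    case False
    then have J_pos: "0 < J x" and R_pos: "0 < R x" using J JR x by (auto simp: less_le)
    have g_pos: "0 < g x" using g[of x] by simp
    have "ln (J x / R x) = ln (J x / (R x * g x)) + ln (g x)"
      using J_pos R_pos g_pos by (simp add: ln_div ln_mult)
    moreover have "J x - R x * g x \<le> J x * ln (J x / (R x * g x))"
      using J_pos R_pos g_pos by (intro diff_le_mult_ln_div) auto
    moreover have "J x * ln (g x) = (if x \<in> D then J x else 0) * ln c"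
      by (simp add: g_def)
    ultimately show ?thesis by (simp add: distrib_left)
  qed
  have "(\<Sum>x\<in>A. R x * g x) = (\<Sum>x\<in>A. R x + (c - 1) * (if x \<in> D then R x else 0))"
    by (intro sum.cong) (auto simp: g_def algebra_simps)
  also have "\<dots> = sum R A + (c - 1) * sum R (A \<inter> D)"
    using \<open>finite A\<close> by (simp add: sum.distrib sum_distrib_left sum.inter_restrict)
  also have "\<dots> \<le> 2"
  proof -
    have "0 \<le> sum R (A \<inter> D)" using R by (auto intro: sum_nonneg)
    then show ?thesis using assms(6-8) by (simp add: left_diff_distrib)
  qed
  finally have mass: "(\<Sum>x\<in>A. R x * g x) \<le> 2" .
  have "(\<Sum>x\<in>A. (if x \<in> D then J x else 0) * ln c) = sum J (A \<inter> D) * ln c"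
    using \<open>finite A\<close> by (simp add: sum.inter_restrict sum_distrib_right)
  then have "(\<Sum>x\<in>A. J x - R x * g x + (if x \<in> D then J x else 0) * ln c)
      = 1 - (\<Sum>x\<in>A. R x * g x) + sum J (A \<inter> D) * ln c"
    using \<open>sum J A = 1\<close> by (simp only: sum.distrib sum_subtractf)
  moreover have "(\<Sum>x\<in>A. J x - R x * g x + (if x \<in> D then J x else 0) * ln c)
      \<le> (\<Sum>x\<in>A. J x * ln (J x / R x))"
    by (intro sum_mono pointwise)
  ultimately show ?thesis using mass by linarith
qed

definition prod_channel :: "('x \<Rightarrow> 'y \<Rightarrow> real) \<Rightarrow> nat \<Rightarrow> 'x list \<Rightarrow> 'y list \<Rightarrow> real" where
  "prod_channel V n xs ys = (\<Prod>i<n. V (xs ! i) (ys ! i))"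

lemma prod_channel_nonneg: "stoch_matrix V \<Longrightarrow> 0 \<le> prod_channel V n xs ys"
  by (auto simp: prod_channel_def stoch_matrix_def intro: prod_nonneg)

lemma sum_prod_channel: "stoch_matrix V \<Longrightarrow> (\<Sum>ys | length ys = n. prod_channel V n xs ys) = 1"
  using sum_lists_length_prod[of "\<lambda>i. V (xs ! i)" n] by (simp add: prod_channel_def stoch_matrix_def)

lemma prod_channel_pos_factor:
  assumes "stoch_matrix V" "prod_channel V n xs ys \<noteq> 0" "i < n"
  shows "0 < V (xs ! i) (ys ! i)"
  using assms by (auto simp: prod_channel_def stoch_matrix_def prod_zero_iff less_le)

lemma prod_channel_divergence:
  fixes V :: "'x::finite \<Rightarrow> 'y::finite \<Rightarrow> real"
  assumes V: "stoch_matrix V" and q: "\<And>i t. i < n \<Longrightarrow> 0 < V (xs ! i) t \<Longrightarrow> 0 < q i t"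
  shows "(\<Sum>ys | length ys = n. prod_channel V n xs ys * ln (prod_channel V n xs ys / (\<Prod>j<n. q j (ys ! j))))
       = (\<Sum>i<n. \<Sum>t\<in>UNIV. V (xs ! i) t * ln (V (xs ! i) t / q i t))"
proof -
  have log_split: "prod_channel V n xs ys * ln (prod_channel V n xs ys / (\<Prod>j<n. q j (ys ! j)))
      = (\<Sum>i<n. prod_channel V n xs ys * ln (V (xs ! i) (ys ! i) / q i (ys ! i)))" for ys
  proof (cases "prod_channel V n xs ys = 0")
    case False
    then have nonzero: "V (xs ! i) (ys ! i) / q i (ys ! i) \<noteq> 0" if "i < n" for i
      using prod_channel_pos_factor[OF V False that] q[OF that] by fastforce
    have "prod_channel V n xs ys / (\<Prod>j<n. q j (ys ! j)) = (\<Prod>i<n. V (xs ! i) (ys ! i) / q i (ys ! i))"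
      by (simp add: prod_channel_def prod_dividef)
    moreover have "ln (\<Prod>i<n. V (xs ! i) (ys ! i) / q i (ys ! i)) = (\<Sum>i<n. ln (V (xs ! i) (ys ! i) / q i (ys ! i)))"
      using nonzero by (intro ln_prod) auto
    ultimately show ?thesis
      by (simp add: sum_distrib_left)
  qed simp
  have "(\<Sum>ys | length ys = n. prod_channel V n xs ys * ln (prod_channel V n xs ys / (\<Prod>j<n. q j (ys ! j))))
      = (\<Sum>i<n. \<Sum>ys | length ys = n. prod_channel V n xs ys * ln (V (xs ! i) (ys ! i) / q i (ys ! i)))"
    by (simp add: log_split sum.swap[of _ "{..<n}"])
  also have "\<dots> = (\<Sum>i<n. \<Sum>t\<in>UNIV. V (xs ! i) t * ln (V (xs ! i) t / q i t))"
    using V by (intro sum.cong refl, unfold prod_channel_def)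
      (auto simp: stoch_matrix_def intro!: sum_lists_length_prod_mult_nth)
  finally show ?thesis .
qed

definition letter_dist :: "(nat \<Rightarrow> 'x list) \<Rightarrow> nat \<Rightarrow> nat \<Rightarrow> 'x \<Rightarrow> real" where
  "letter_dist enc m i x = card {s \<in> {1..m}. enc s ! i = x} / m"

lemma sum_codebook_letter:
  fixes enc :: "nat \<Rightarrow> 'x::finite list"
  shows "(\<Sum>s\<in>{1..m}. f (enc s ! i)) = m * (\<Sum>x\<in>UNIV. letter_dist enc m i x * f x)"
proof (cases "m = 0")
  case False
  then show ?thesis
    using sum_fun_comp[of "{1..m}" UNIV "\<lambda>s. enc s ! i" f]
    by (simp add: letter_dist_def sum_distrib_left)
qed simp

lemma input_dist_letter_dist:
  fixes enc :: "nat \<Rightarrow> 'x::finite list"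
  assumes "1 \<le> m"
  shows "input_dist (letter_dist enc m i)"
  using sum_codebook_letter[where f = "\<lambda>_. 1" and enc = enc and m = m and i = i] assms
  by (auto simp: input_dist_def letter_dist_def)

lemma letter_dist_codeword_ge:
  assumes "s \<in> {1..m}"
  shows "1 / m \<le> letter_dist enc m i (enc s ! i)"
proof -
  have "0 < card {s' \<in> {1..m}. enc s' ! i = enc s ! i}"
    using assms by (intro card_gt_0_iff[THEN iffD2]) auto
  then show ?thesis
    by (simp add: letter_dist_def divide_right_mono)
qed

lemma sum_output_dist:
  assumes "input_dist p" "stoch_matrix V"
  shows "(\<Sum>t\<in>UNIV. \<Sum>x\<in>UNIV. p x * V x t) = 1"
proof -
  have "(\<Sum>t\<in>UNIV. \<Sum>x\<in>UNIV. p x * V x t) = (\<Sum>x\<in>UNIV. p x * (\<Sum>t\<in>UNIV. V x t))"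
    by (subst sum.swap) (simp add: sum_distrib_left)
  then show ?thesis
    using assms by (simp add: input_dist_def stoch_matrix_def)
qed

lemma letter_output_pos:
  assumes V: "stoch_matrix V" and s: "s \<in> {1..m}" and pos: "0 < V (enc s ! i) t"
  shows "0 < (\<Sum>x\<in>UNIV. letter_dist enc m i x * V x t)"
proof -
  have "0 < letter_dist enc m i (enc s ! i)"
    using letter_dist_codeword_ge[OF s, of enc i] s by (auto intro: less_le_trans[rotated])
  then have "0 < letter_dist enc m i (enc s ! i) * V (enc s ! i) t"
    using pos by simp
  also have "\<dots> \<le> (\<Sum>x\<in>UNIV. letter_dist enc m i x * V x t)"
    using V by (intro member_le_sum) (auto simp: stoch_matrix_def letter_dist_def)
  finally show ?thesis .
qed

lemma codebook_divergence:
  fixes V :: "'x::finite \<Rightarrow> 'y::finite \<Rightarrow> real" and enc :: "nat \<Rightarrow> 'x list" and m :: nat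
  assumes V: "stoch_matrix V"
  defines "q \<equiv> \<lambda>i t. \<Sum>x\<in>UNIV. letter_dist enc m i x * V x t"
  shows "(\<Sum>s\<in>{1..m}. \<Sum>ys | length ys = n.
            prod_channel V n (enc s) ys * ln (prod_channel V n (enc s) ys / (\<Prod>j<n. q j (ys ! j))))
       = m * (\<Sum>i<n. mutual_info (letter_dist enc m i) V)"
proof -
  define G where "G i x = (\<Sum>t\<in>UNIV. V x t * ln (V x t / q i t))" for i x
  have "(\<Sum>s\<in>{1..m}. \<Sum>ys | length ys = n.
            prod_channel V n (enc s) ys * ln (prod_channel V n (enc s) ys / (\<Prod>j<n. q j (ys ! j))))
      = (\<Sum>s\<in>{1..m}. \<Sum>i<n. G i (enc s ! i))"
    unfolding q_def G_def using V letter_output_pos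
    by (intro sum.cong refl prod_channel_divergence) blast+
  also have "\<dots> = (\<Sum>i<n. \<Sum>s\<in>{1..m}. G i (enc s ! i))"
    by (rule sum.swap)
  also have "\<dots> = (\<Sum>i<n. m * (\<Sum>x\<in>UNIV. letter_dist enc m i x * G i x))"
    by (simp only: sum_codebook_letter)
  also have "\<dots> = m * (\<Sum>i<n. mutual_info (letter_dist enc m i) V)"
    by (simp add: mutual_info_def G_def q_def sum_distrib_left mult.assoc)
  finally show ?thesis .
qed

definition code_success ::
    "('x \<Rightarrow> 'y \<Rightarrow> real) \<Rightarrow> nat \<Rightarrow> nat \<Rightarrow> ('s \<Rightarrow> 'x list) \<Rightarrow> ('y list \<Rightarrow> 's) \<Rightarrow> real"
  where "code_success V m n enc dec = (\<Sum>ys | length ys = n. prod_channel V n (enc (dec ys)) ys) / m"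

lemma letter_output_prod_law:
  fixes V :: "'x::finite \<Rightarrow> 'y::finite \<Rightarrow> real" and enc :: "nat \<Rightarrow> 'x list" and m n :: nat
  assumes V: "stoch_matrix V" and m: "1 \<le> m"
  defines "Q \<equiv> \<lambda>ys. \<Prod>j<n. \<Sum>x\<in>UNIV. letter_dist enc m j x * V x (ys ! j)"
  shows "0 \<le> Q ys"
    and "(\<Sum>ys | length ys = n. Q ys) = 1"
    and "s \<in> {1..m} \<Longrightarrow> prod_channel V n (enc s) ys \<noteq> 0 \<Longrightarrow> 0 < Q ys"
proof -
  define q where "q j t = (\<Sum>x\<in>UNIV. letter_dist enc m j x * V x t)" for j t
  have p: "input_dist (letter_dist enc m j)" for j
    using m by (rule input_dist_letter_dist)
  show "0 \<le> Q ys"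
    using p V unfolding Q_def input_dist_def stoch_matrix_def
    by (auto intro!: prod_nonneg sum_nonneg)
  have "(\<Sum>ys | length ys = n. Q ys) = (\<Prod>j<n. \<Sum>t\<in>UNIV. q j t)"
    unfolding Q_def q_def by (rule sum_lists_length_prod)
  also have "\<dots> = 1"
    using sum_output_dist[OF p V] by (simp add: q_def)
  finally show "(\<Sum>ys | length ys = n. Q ys) = 1" .
  show "0 < Q ys" if "s \<in> {1..m}" "prod_channel V n (enc s) ys \<noteq> 0"
    unfolding Q_def using prod_channel_pos_factor[OF V that(2)] letter_output_pos[OF V that(1)]
    by (auto intro: prod_pos)
qed

lemma code_success_ln_le_mutual_info:
  fixes V :: "'x::finite \<Rightarrow> 'y::finite \<Rightarrow> real" and enc :: "nat \<Rightarrow> 'x list"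
  assumes V: "stoch_matrix V" and m: "1 \<le> m" and dec: "\<And>ys. length ys = n \<Longrightarrow> dec ys \<in> {1..m}"
  shows "code_success V m n enc dec * ln m - 1 \<le> (\<Sum>i<n. mutual_info (letter_dist enc m i) V)"
proof -
  define Q where "Q ys = (\<Prod>j<n. \<Sum>x\<in>UNIV. letter_dist enc m j x * V x (ys ! j))" for ys
  define Yn where "Yn = {ys::'y list. length ys = n}"
  define A where "A = {1..m} \<times> Yn"
  define J where "J = (\<lambda>(s, ys). prod_channel V n (enc s) ys / m)"
  define R where "R = (\<lambda>(s :: nat, ys). Q ys / m)"
  define D where "D = {(s, ys). dec ys = s}"
  have Q_nonneg: "0 \<le> Q ys" and Q_sum: "sum Q Yn = 1"
    and Q_pos: "\<And>s. s \<in> {1..m} \<Longrightarrow> prod_channel V n (enc s) ys \<noteq> 0 \<Longrightarrow> 0 < Q ys" for ys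
    using letter_output_prod_law[OF V m, where n = n and enc = enc] by (simp_all add: Q_def Yn_def)
  have fin_A: "finite A"
    by (simp add: A_def Yn_def finite_lists_length)
  have m_pos: "0 < real m" using m by simp
  have AD: "A \<inter> D = (\<lambda>ys. (dec ys, ys)) ` Yn"
    using dec by (auto simp: A_def D_def Yn_def)
  have inj: "inj_on (\<lambda>ys. (dec ys, ys)) Yn"
    by (rule inj_onI) simp
  have "sum J (A \<inter> D) * ln (real m) - 1 \<le> (\<Sum>x\<in>A. J x * ln (J x / R x))"
  proof (rule success_ln_le_divergence)
    show "sum J A = 1"
      using m_pos sum_prod_channel[OF V]
      by (simp add: A_def J_def Yn_def sum.cartesian_product[symmetric] sum_divide_distrib[symmetric])
    show "sum R A \<le> 1"
      using m_pos Q_sum by (simp add: A_def R_def sum.cartesian_product[symmetric] sum_divide_distrib[symmetric])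
    show "real m * sum R (A \<inter> D) \<le> 1"
      using m_pos Q_sum by (simp add: AD sum.reindex[OF inj] R_def sum_divide_distrib[symmetric])
  qed (use fin_A m m_pos Q_nonneg Q_pos prod_channel_nonneg[OF V]
      in \<open>auto simp: A_def J_def R_def zero_less_divide_iff\<close>)
  moreover have "sum J (A \<inter> D) = code_success V m n enc dec"
    unfolding AD sum.reindex[OF inj] by (simp add: J_def code_success_def Yn_def sum_divide_distrib)
  moreover have "(\<Sum>x\<in>A. J x * ln (J x / R x))
      = (\<Sum>s\<in>{1..m}. \<Sum>ys\<in>Yn. prod_channel V n (enc s) ys * ln (prod_channel V n (enc s) ys / Q ys)) / m"
    using m_pos by (simp add: A_def J_def R_def sum.cartesian_product' sum_divide_distrib)
  moreover have "\<dots> = (\<Sum>i<n. mutual_info (letter_dist enc m i) V)"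
    using codebook_divergence[OF V, where m = m and n = n and enc = enc] m_pos by (simp add: Yn_def Q_def)
  ultimately show ?thesis by simp
qed

lemma (in prob_space) prob_message_output:
  assumes [measurable]: "S \<in> measurable M (count_space UNIV)" "Y \<in> measurable M (count_space UNIV)"
    and law: "memoryless_law M (\<lambda>\<omega>. enc (S \<omega>)) Y V n"
    and markov: "\<P>(\<omega> in M. S \<omega> = s \<and> Y \<omega> = ys) * \<P>(\<omega> in M. enc (S \<omega>) = enc s)
                 = \<P>(\<omega> in M. S \<omega> = s) * \<P>(\<omega> in M. enc (S \<omega>) = enc s \<and> Y \<omega> = ys)"
    and pos: "0 < \<P>(\<omega> in M. S \<omega> = s)"
    and "length (enc s) = n" "length ys = n"
  shows "\<P>(\<omega> in M. S \<omega> = s \<and> Y \<omega> = ys) = \<P>(\<omega> in M. S \<omega> = s) * prod_channel V n (enc s) ys"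
proof -
  have [measurable]: "(\<lambda>\<omega>. enc (S \<omega>)) \<in> measurable M (count_space UNIV)"
    using measurable_compose[OF assms(1), of enc "count_space UNIV"] by simp
  have "{\<omega> \<in> space M. enc (S \<omega>) = enc s} \<in> events"
    by measurable
  then have "\<P>(\<omega> in M. S \<omega> = s) \<le> \<P>(\<omega> in M. enc (S \<omega>) = enc s)"
    by (intro finite_measure_mono) auto
  then have codeword_pos: "0 < \<P>(\<omega> in M. enc (S \<omega>) = enc s)"
    using pos by linarith
  have "\<P>(\<omega> in M. enc (S \<omega>) = enc s \<and> Y \<omega> = ys)
      = \<P>(\<omega> in M. enc (S \<omega>) = enc s) * prod_channel V n (enc s) ys"
    using law assms(6,7) by (simp add: memoryless_law_def prod_channel_def)
  with markov have "\<P>(\<omega> in M. S \<omega> = s \<and> Y \<omega> = ys) * \<P>(\<omega> in M. enc (S \<omega>) = enc s)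
      = \<P>(\<omega> in M. S \<omega> = s) * prod_channel V n (enc s) ys * \<P>(\<omega> in M. enc (S \<omega>) = enc s)"
    by (simp add: ac_simps)
  then show ?thesis
    using codeword_pos by simp
qed

lemma (in prob_space) prob_decoding_error:
  fixes Y :: "'a \<Rightarrow> 'y::finite list"
  assumes [measurable]: "S \<in> measurable M (count_space UNIV)" "Y \<in> measurable M (count_space UNIV)"
    and len: "\<And>\<omega>. \<omega> \<in> space M \<Longrightarrow> length (Y \<omega>) = n"
    and enc: "\<And>s. s \<in> {1..m} \<Longrightarrow> length (enc s) = n"
    and dec: "\<And>ys. length ys = n \<Longrightarrow> dec ys \<in> {1..m}"
    and uniform: "\<And>s. s \<in> {1..m} \<Longrightarrow> \<P>(\<omega> in M. S \<omega> = s) = 1 / m"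
    and law: "memoryless_law M (\<lambda>\<omega>. enc (S \<omega>)) Y V n"
    and markov: "\<And>s ys. \<P>(\<omega> in M. S \<omega> = s \<and> Y \<omega> = ys) * \<P>(\<omega> in M. enc (S \<omega>) = enc s)
                 = \<P>(\<omega> in M. S \<omega> = s) * \<P>(\<omega> in M. enc (S \<omega>) = enc s \<and> Y \<omega> = ys)"
  shows "\<P>(\<omega> in M. dec (Y \<omega>) \<noteq> S \<omega>) = 1 - code_success V m n enc dec"
proof -
  have joint: "\<P>(\<omega> in M. S \<omega> = dec ys \<and> Y \<omega> = ys) = prod_channel V n (enc (dec ys)) ys / m"
    if ys: "length ys = n" for ys
  proof -
    have "0 < \<P>(\<omega> in M. S \<omega> = dec ys)"
      using uniform[OF dec[OF ys]] dec[OF ys] by simp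
    then show ?thesis
      using prob_message_output[OF _ _ law markov] uniform[OF dec[OF ys]] enc[OF dec[OF ys]] ys by simp
  qed
  have "{\<omega> \<in> space M. \<exists>s. S \<omega> = s \<and> dec (Y \<omega>) = s} \<in> events"
    by measurable
  then have decoded_event: "{\<omega> \<in> space M. dec (Y \<omega>) = S \<omega>} \<in> events"
    by simp
  have "\<P>(\<omega> in M. dec (Y \<omega>) = S \<omega>)
      = (\<Sum>ys | length ys = n. \<P>(\<omega> in M. S \<omega> = dec ys \<and> Y \<omega> = ys))"
  proof (rule prob_sum)
    show "{\<omega> \<in> space M. S \<omega> = dec ys \<and> Y \<omega> = ys} \<in> events" for ys
      by measurable
  qed (use decoded_event in \<open>auto simp: len finite_lists_length intro!: AE_I2\<close>)
  also have "\<dots> = code_success V m n enc dec"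
    by (simp add: joint code_success_def sum_divide_distrib)
  finally have "\<P>(\<omega> in M. dec (Y \<omega>) = S \<omega>) = code_success V m n enc dec" .
  moreover have "{\<omega> \<in> space M. dec (Y \<omega>) \<noteq> S \<omega>} = space M - {\<omega> \<in> space M. dec (Y \<omega>) = S \<omega>}"
    by auto
  ultimately show ?thesis
    using decoded_event by (simp add: prob_compl)
qed

lemma mutual_info_le_card:
  fixes p :: "'x::finite \<Rightarrow> real" and V :: "'x \<Rightarrow> 'y::finite \<Rightarrow> real"
  assumes p: "input_dist p" and V: "stoch_matrix V"
  shows "mutual_info p V \<le> CARD('x)"
proof -
  have term_le: "p x * V x y * ln (V x y / (\<Sum>x'\<in>UNIV. p x' * V x' y)) \<le> V x y" for x y
  proof -
    define q where "q = (\<Sum>x'\<in>UNIV. p x' * V x' y)"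
    have px: "0 \<le> p x" and Vxy: "0 \<le> V x y"
      using p V by (auto simp: input_dist_def stoch_matrix_def)
    have pVq: "p x * V x y \<le> q"
      unfolding q_def using p V by (intro member_le_sum[of x UNIV "\<lambda>x'. p x' * V x' y"])
        (auto simp: input_dist_def stoch_matrix_def)
    show ?thesis
    proof (cases "p x * V x y = 0")
      case False
      then have pV_pos: "0 < p x * V x y" and V_pos: "0 < V x y"
        using px Vxy by (auto simp: less_le)
      have q_pos: "0 < q"
        using pV_pos pVq by simp
      have "p x * V x y * ln (V x y / q) \<le> p x * V x y * (V x y / q)"
        using pV_pos V_pos q_pos by (intro mult_left_mono) (auto intro: order_trans[OF ln_le_minus_one])
      also have "\<dots> = V x y * (p x * V x y / q)"
        by simp
      also have "\<dots> \<le> V x y"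
        using V_pos q_pos pVq by (intro mult_left_le) simp_all
      finally show ?thesis unfolding q_def .
    qed (use Vxy in auto)
  qed
  have "mutual_info p V \<le> (\<Sum>x\<in>UNIV. \<Sum>y\<in>UNIV. V x y)"
    unfolding mutual_info_def by (intro sum_mono term_le)
  also have "\<dots> = CARD('x)"
    using V by (simp add: stoch_matrix_def)
  finally show ?thesis .
qed

lemma mutual_info_le_upper_capacity:
  assumes W: "\<forall>l\<in>\<Lambda>. stoch_matrix (W l)" and "input_dist p" "l \<in> \<Lambda>"
  shows "mutual_info p (W l) \<le> upper_capacity W \<Lambda>"
proof -
  have "bdd_above ((\<lambda>pl. mutual_info (fst pl) (W (snd pl))) ` ({p. input_dist p} \<times> \<Lambda>))"
    using W by (intro bdd_aboveI2[where M = "real CARD('x)"]) (auto intro: mutual_info_le_card)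
  then have "mutual_info (fst (p, l)) (W (snd (p, l))) \<le> upper_capacity W \<Lambda>"
    unfolding upper_capacity_def using assms(2,3) by (intro cSUP_upper) auto
  then show ?thesis
    by simp
qed

lemma rate_le_of_error_tendsto_zero:
  fixes e :: "nat \<Rightarrow> real" and R C :: real
  assumes bound: "\<And>n. 1 \<le> n \<Longrightarrow> (1 - e n) * (n * R) \<le> n * C + 1" and "e \<longlonglongrightarrow> 0"
  shows "R \<le> C"
proof -
  have "\<forall>n\<ge>1. (1 - e n) * R \<le> C + 1 / n"
    using bound by (auto simp: field_simps)
  moreover have "(\<lambda>n. (1 - e n) * R) \<longlonglongrightarrow> (1 - 0) * R"
    using \<open>e \<longlonglongrightarrow> 0\<close> by (intro tendsto_intros)
  moreover have "(\<lambda>n. C + 1 / real n) \<longlonglongrightarrow> C + 0"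
    by (intro tendsto_intros)
  ultimately have "(1 - 0) * R \<le> C + 0"
    by (intro LIMSEQ_le) auto
  then show ?thesis
    by simp
qed

theorem theorem11:
  fixes P :: "'th \<Rightarrow> 'w measure" and \<Theta> :: "'th set"
    and W :: "'l \<Rightarrow> 'x::finite \<Rightarrow> 'y::finite \<Rightarrow> real" and \<Lambda> :: "'l set"
    and M :: "nat \<Rightarrow> nat"
    and enc :: "nat \<Rightarrow> nat \<Rightarrow> 'x list" and dec :: "nat \<Rightarrow> 'y list \<Rightarrow> nat"
    and S :: "nat \<Rightarrow> 'w \<Rightarrow> nat" and Y :: "nat \<Rightarrow> 'w \<Rightarrow> 'y list"
    and Rc :: real
  assumes Theta_ne: "\<Theta> \<noteq> {}"
    and prob: "\<forall>\<theta>\<in>\<Theta>. prob_space (P \<theta>)"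
    and Lambda_ne: "\<Lambda> \<noteq> {}"
    and chan: "\<forall>l\<in>\<Lambda>. stoch_matrix (W l)"
    and code: "\<forall>n\<ge>1. M n \<ge> 1 \<and> (\<forall>s\<in>{1..M n}. length (enc n s) = n)
                   \<and> (\<forall>ys. length ys = n \<longrightarrow> dec n ys \<in> {1..M n})"
    and rate: "\<forall>n\<ge>1. ln (real (M n)) / real n = Rc"
    and meas: "\<forall>n\<ge>1. \<forall>\<theta>\<in>\<Theta>. S n \<in> measurable (P \<theta>) (count_space UNIV)
                   \<and> Y n \<in> measurable (P \<theta>) (count_space UNIV)"
    and vals: "\<forall>n\<ge>1. \<forall>\<theta>\<in>\<Theta>. \<forall>\<omega>\<in>space (P \<theta>). S n \<omega> \<in> {1..M n} \<and> length (Y n \<omega>) = n"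
    and uniform: "\<forall>n\<ge>1. \<forall>\<theta>\<in>\<Theta>. \<forall>s\<in>{1..M n}.
                   measure (P \<theta>) {\<omega> \<in> space (P \<theta>). S n \<omega> = s} = 1 / real (M n)"
    and memoryless1: "\<forall>n\<ge>1. \<forall>\<theta>\<in>\<Theta>. \<exists>l\<in>\<Lambda>.
                   memoryless_law (P \<theta>) (\<lambda>\<omega>. enc n (S n \<omega>)) (Y n) (W l) n"
    and memoryless2: "\<forall>n\<ge>1. \<forall>l\<in>\<Lambda>. \<exists>\<theta>\<in>\<Theta>.
                   memoryless_law (P \<theta>) (\<lambda>\<omega>. enc n (S n \<omega>)) (Y n) (W l) n"
    and markov: "\<forall>n\<ge>1. \<forall>\<theta>\<in>\<Theta>. \<forall>s ys.
                   measure (P \<theta>) {\<omega> \<in> space (P \<theta>). S n \<omega> = s \<and> Y n \<omega> = ys}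
                     * measure (P \<theta>) {\<omega> \<in> space (P \<theta>). enc n (S n \<omega>) = enc n s}
                   = measure (P \<theta>) {\<omega> \<in> space (P \<theta>). S n \<omega> = s}
                     * measure (P \<theta>) {\<omega> \<in> space (P \<theta>). enc n (S n \<omega>) = enc n s \<and> Y n \<omega> = ys}"
    and err: "(\<lambda>n. SUP \<theta>\<in>\<Theta>. measure (P \<theta>) {\<omega> \<in> space (P \<theta>). dec n (Y n \<omega>) \<noteq> S n \<omega>})
                \<longlonglongrightarrow> 0"
  shows "Rc \<le> upper_capacity W \<Lambda>"
proof -
  define e where "e n = (SUP \<theta>\<in>\<Theta>. measure (P \<theta>) {\<omega> \<in> space (P \<theta>). dec n (Y n \<omega>) \<noteq> S n \<omega>})" for n
  have "(1 - e n) * (n * Rc) \<le> n * upper_capacity W \<Lambda> + 1" if n: "1 \<le> n" for n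
  proof -
    obtain \<theta> where \<theta>: "\<theta> \<in> \<Theta>" using Theta_ne by blast
    \<comment> \<open>One parameter \<theta> suffices.\<close>
    then obtain l where l: "l \<in> \<Lambda>" and law: "memoryless_law (P \<theta>) (\<lambda>\<omega>. enc n (S n \<omega>)) (Y n) (W l) n"
      using memoryless1 n by blast
    interpret prob_space "P \<theta>" using prob \<theta> by blast
    let ?Ps = "code_success (W l) (M n) n (enc n) (dec n)"
    have "\<P>(\<omega> in P \<theta>. dec n (Y n \<omega>) \<noteq> S n \<omega>) = 1 - ?Ps"
      using law code meas vals uniform markov n \<theta> by (intro prob_decoding_error) auto
    moreover have "\<P>(\<omega> in P \<theta>. dec n (Y n \<omega>) \<noteq> S n \<omega>) \<le> e n"
      unfolding e_def using prob
      by (intro cSUP_upper[OF \<theta>] bdd_aboveI2[where M = 1]) (auto intro: prob_space.prob_le_1)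
    ultimately have success: "1 - e n \<le> ?Ps"
      by simp
    have "?Ps * ln (M n) - 1 \<le> (\<Sum>i<n. mutual_info (letter_dist (enc n) (M n) i) (W l))"
      using code n by (intro code_success_ln_le_mutual_info chan[rule_format, OF l]) auto
    also have "\<dots> \<le> n * upper_capacity W \<Lambda>"
      using sum_bounded_above[of "{..<n}" "\<lambda>i. mutual_info (letter_dist (enc n) (M n) i) (W l)"]
        mutual_info_le_upper_capacity[OF chan input_dist_letter_dist l] code n
      by simp
    finally have "?Ps * ln (M n) - 1 \<le> n * upper_capacity W \<Lambda>" .
    moreover have "ln (M n) = n * Rc"
      using rate n by (auto simp: field_simps)
    moreover have "0 \<le> ln (M n)"
      using code n by simp
    ultimately show ?thesis
      using mult_right_mono[OF success \<open>0 \<le> ln (M n)\<close>] by simp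
  qed
  then show ?thesis
    using err unfolding e_def[symmetric] by (rule rate_le_of_error_tendsto_zero)
qed

end
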